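(* In the setting described in the context (with $L=[0,1]$), let $q\in\{1,\dots,n\}$ and assume there exists $A\subseteq\mathcal C$ with $|A|=n-q$ and $\nu_q(A)=0$. Define $\mu_*:2^{\mathcal C}\to[0,1]$ by $\mu_*(\mathcal C)=1$, $\mu_*(X)=\nu_q(X)$ if $n-q\le|X|<n$, and $\mu_*(X)=\min_{Y\supsetneq X,\ n-q\le|Y|<n}\nu_q(Y)$ if $|X|<n-q$. Then $\mu_*$ is a $q$-minitive capacity and $\max_{1\le k\le N}|S_{\mu_*}(x^{(k)})-\alpha^{(k)}|=\nabla_q$.
   Context: Let $\mathcal C=\{1,\dots,n\}$ and $L=[0,1]$. A capacity is a map $\mu:2^{\mathcal C}\to[0,1]$ with $\mu(\emptyset)=0$, $\mu(\mathcal C)=1$, monotone for inclusion; it is $q$-minitive if for all $X$ with $|X|<n-q$, $\mu(X)=\min_{Y\supsetneq X,\ |Y|\ge n-q}\mu(Y)$. Sugeno integral: $S_\mu(x)=\max_{A\subseteq\mathcal C}\min(\min_{i\in A}x_i,\mu(A))$ with $\min_{i\in\emptyset}x_i=1$. Training data: $N$ pairs $(x^{(k)},\alpha^{(k)})$, $x^{(k)}\in[0,1]^n$, $\alpha^{(k)}\in[0,1]$. For $A\subsetneq\mathcal C$, $\gamma_{k,A}=\max_{i\in\mathcal C\setminus A}x^{(k)}_i$. Write $t^+=\max(t,0)$. For $1\le i\le N$ and $A\subsetneq\mathcal C$ with $|A|\ge n-q$, let $\sigma_\epsilon(\alpha^{(i)},\gamma_{l,A},\alpha^{(l)})=\min\big(\tfrac{(\alpha^{(l)}-\alpha^{(i)})^+}{2},(\alpha^{(l)}-\gamma_{l,A})^+\big)$,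 $\nabla_{i,A}=\max\big((\gamma_{i,A}-\alpha^{(i)})^+,\max_{1\le l\le N}\sigma_\epsilon(\alpha^{(i)},\gamma_{l,A},\alpha^{(l)})\big)$, $\nabla_i=\min_{A\subsetneq\mathcal C,\ |A|\ge n-q}\nabla_{i,A}$, and $\nabla_q=\max_{1\le i\le N}\nabla_i$. For $A\subsetneq\mathcal C$ with $|A|\ge n-q$, $\nu_q(A)=\max_{1\le k\le N}\big(\gamma_{k,A}\,\epsilon\,\max(\alpha^{(k)}-\nabla_q,0)\big)$, where $a\,\epsilon\,b=b$ if $a<b$ and $a\,\epsilon\,b=0$ if $a\ge b$. *)

theory Defs
  imports Complex_Main
begin

text \<open>Criteria set C = {1..n}; data points indexed by k in {1..N};
  x k i is the i-th coordinate of x^(k), alpha k is alpha^(k).\<close>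

definition crit :: "nat \<Rightarrow> nat set" where
  "crit n = {1..n}"

definition pos :: "real \<Rightarrow> real" where
  "pos t = max t 0"

definition gam :: "nat \<Rightarrow> (nat \<Rightarrow> nat \<Rightarrow> real) \<Rightarrow> nat \<Rightarrow> nat set \<Rightarrow> real" where
  "gam n x k A = Max ((x k) ` (crit n - A))"

definition sigma_eps :: "real \<Rightarrow> real \<Rightarrow> real \<Rightarrow> real" where
  "sigma_eps ai g al = min (pos (al - ai) / 2) (pos (al - g))"

definition eps_op :: "real \<Rightarrow> real \<Rightarrow> real" where
  "eps_op a b = (if a < b then b else 0)"

definition upper_sets :: "nat \<Rightarrow> nat \<Rightarrow> nat set set" where
  "upper_sets n q = {A. A \<subset> crit n \<and> n - q \<le> card A}"

definition nabla_iA :: "nat \<Rightarrow> nat \<Rightarrow> (nat \<Rightarrow> nat \<Rightarrow> real) \<Rightarrow> (nat \<Rightarrow> real) \<Rightarrow> nat \<Rightarrow> nat set \<Rightarrow> real" where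
  "nabla_iA n N x alpha i A =
     max (pos (gam n x i A - alpha i))
         (Max ((\<lambda>l. sigma_eps (alpha i) (gam n x l A) (alpha l)) ` {1..N}))"

definition nabla_i :: "nat \<Rightarrow> nat \<Rightarrow> nat \<Rightarrow> (nat \<Rightarrow> nat \<Rightarrow> real) \<Rightarrow> (nat \<Rightarrow> real) \<Rightarrow> nat \<Rightarrow> real" where
  "nabla_i n q N x alpha i = Min ((\<lambda>A. nabla_iA n N x alpha i A) ` upper_sets n q)"

definition nabla_q :: "nat \<Rightarrow> nat \<Rightarrow> nat \<Rightarrow> (nat \<Rightarrow> nat \<Rightarrow> real) \<Rightarrow> (nat \<Rightarrow> real) \<Rightarrow> real" where
  "nabla_q n q N x alpha = Max ((\<lambda>i. nabla_i n q N x alpha i) ` {1..N})"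

definition nu_q :: "nat \<Rightarrow> nat \<Rightarrow> nat \<Rightarrow> (nat \<Rightarrow> nat \<Rightarrow> real) \<Rightarrow> (nat \<Rightarrow> real) \<Rightarrow> nat set \<Rightarrow> real" where
  "nu_q n q N x alpha A =
     Max ((\<lambda>k. eps_op (gam n x k A) (max (alpha k - nabla_q n q N x alpha) 0)) ` {1..N})"

definition mu_star :: "nat \<Rightarrow> nat \<Rightarrow> nat \<Rightarrow> (nat \<Rightarrow> nat \<Rightarrow> real) \<Rightarrow> (nat \<Rightarrow> real) \<Rightarrow> nat set \<Rightarrow> real" where
  "mu_star n q N x alpha X =
     (if X = crit n then 1
      else if n - q \<le> card X \<and> card X < n then nu_q n q N x alpha X
      else Min (nu_q n q N x alpha ` {Y. X \<subset> Y \<and> Y \<subseteq> crit n \<and> n - q \<le> card Y \<and> card Y < n}))"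

definition capacity :: "nat \<Rightarrow> (nat set \<Rightarrow> real) \<Rightarrow> bool" where
  "capacity n mu \<longleftrightarrow>
     (\<forall>X. X \<subseteq> crit n \<longrightarrow> 0 \<le> mu X \<and> mu X \<le> 1) \<and>
     mu {} = 0 \<and> mu (crit n) = 1 \<and>
     (\<forall>X Y. X \<subseteq> Y \<and> Y \<subseteq> crit n \<longrightarrow> mu X \<le> mu Y)"

definition q_minitive :: "nat \<Rightarrow> nat \<Rightarrow> (nat set \<Rightarrow> real) \<Rightarrow> bool" where
  "q_minitive n q mu \<longleftrightarrow>
     (\<forall>X. X \<subseteq> crit n \<and> card X < n - q \<longrightarrow>
        mu X = Min (mu ` {Y. X \<subset> Y \<and> Y \<subseteq> crit n \<and> n - q \<le> card Y}))"

definition sugeno :: "nat \<Rightarrow> (nat set \<Rightarrow> real) \<Rightarrow> (nat \<Rightarrow> real) \<Rightarrow> real" where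
  "sugeno n mu y =
     Max ((\<lambda>A. min (if A = {} then 1 else Min (y ` A)) (mu A)) ` Pow (crit n))"

end

theory Submission
  imports Defs
begin

(* Every proper subset of C lies below a set B with n - q <= |B| < n of no larger capacity,
   so the Sugeno integral of a q-minitive capacity is the minimum over such B of
   max(gamma_B(x), mu(B)).  For mu_* these values are nu_q(B), and nu_q is built so that
   every prediction lies within nabla_q of alpha^(k): it is at least alpha^(k) - nabla_q
   because of the threshold max(alpha^(k) - nabla_q, 0) in nu_q, and at most
   alpha^(k) + nabla_q at a set A attaining nabla_k.  Conversely, if some min-max model
   fits all data with error at most E, then for i attaining nabla_q and the set B realizing
   the minimum at x^(i), every term of nabla_{i,B} is at most E.  The hypothesis
   nu_q(A) = 0 for some |A| = n - q is used only to get mu_*(emptyset) = 0. *)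

lemma finite_crit [simp]: "finite (crit n)"
  by (simp add: crit_def)

lemma card_crit [simp]: "card (crit n) = n"
  by (simp add: crit_def)

lemma finite_upper_sets: "finite (upper_sets n q)"
  unfolding upper_sets_def by (rule finite_subset[of _ "Pow (crit n)"]) auto

lemma upper_sets_iff: "B \<in> upper_sets n q \<longleftrightarrow> B \<subseteq> crit n \<and> n - q \<le> card B \<and> card B < n"
  unfolding upper_sets_def
  using psubset_card_mono[of "crit n" B] card_seteq[of "crit n" B] by fastforce

lemma upper_sets_nonempty:
  assumes "q \<in> {1..n}"
  shows "upper_sets n q \<noteq> {}"
proof -
  have "crit n - {n} \<in> upper_sets n q"
    using assms by (auto simp: upper_sets_iff crit_def)
  then show ?thesis
    by blast
qed

lemma upper_sets_above:
  assumes "1 \<le> q" "X \<subseteq> crit n" "card X < n - q"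
  obtains Y where "Y \<in> upper_sets n q" "X \<subset> Y"
proof -
  obtain Y where "X \<subseteq> Y" "Y \<subseteq> crit n" "card Y = n - q"
    using exists_subset_between[of X "n - q" "crit n"] assms by auto
  with assms have "Y \<in> upper_sets n q" "X \<subset> Y"
    by (auto simp: upper_sets_iff)
  then show thesis
    using that by blast
qed

lemma gam_antimono:
  assumes "A \<subseteq> B" "B \<subset> crit n"
  shows "gam n x k B \<le> gam n x k A"
  unfolding gam_def using assms by (intro Max_mono) auto

lemma sugeno_le_max:
  assumes mono: "\<And>X Y. X \<subseteq> Y \<Longrightarrow> Y \<subseteq> crit n \<Longrightarrow> mu X \<le> mu Y"
    and B: "B \<subset> crit n"
  shows "sugeno n mu y \<le> max (Max (y ` (crit n - B))) (mu B)"
  unfolding sugeno_def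
proof (rule Max.boundedI)
  fix t assume "t \<in> (\<lambda>A. min (if A = {} then 1 else Min (y ` A)) (mu A)) ` Pow (crit n)"
  then obtain A where A: "A \<subseteq> crit n"
    and t: "t = min (if A = {} then 1 else Min (y ` A)) (mu A)"
    by auto
  show "t \<le> max (Max (y ` (crit n - B))) (mu B)"
  proof (cases "A \<subseteq> B")
    case True
    then have "mu A \<le> mu B"
      using mono B by auto
    then show ?thesis
      using t by linarith
  next
    case False
    then obtain i where i: "i \<in> A" "i \<notin> B"
      by auto
    have "Min (y ` A) \<le> y i"
      using i A finite_subset[OF A] by (intro Min_le) auto
    also have "y i \<le> Max (y ` (crit n - B))"
      using i A by (intro Max_ge) auto
    finally show ?thesis
      using t i by auto
  qed
qed auto

lemma ex_max_le_sugeno: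
  assumes top: "mu (crit n) = 1"
    and y_le_1: "\<And>i. i \<in> crit n \<Longrightarrow> y i \<le> 1"
    and U: "U \<noteq> {}" "\<And>B. B \<in> U \<Longrightarrow> B \<subset> crit n" "\<And>B. B \<in> U \<Longrightarrow> mu B \<le> 1"
    and below: "\<And>A. A \<subset> crit n \<Longrightarrow> \<exists>B\<in>U. A \<subseteq> B \<and> mu B \<le> mu A"
  shows "\<exists>B\<in>U. max (Max (y ` (crit n - B))) (mu B) \<le> sugeno n mu y"
proof (cases "1 \<le> sugeno n mu y")
  case True
  obtain B where B: "B \<in> U"
    using U(1) by auto
  have "Max (y ` (crit n - B)) \<le> 1"
    using U(2)[OF B] y_le_1 by (subst Max_le_iff) auto
  then show ?thesis
    using B U(3)[OF B] True by (intro bexI[of _ B]) auto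
next
  case False
  define t where "t = sugeno n mu y"
  define A where "A = {i \<in> crit n. t < y i}"
  have "A \<in> Pow (crit n)"
    by (auto simp: A_def)
  then have "min (if A = {} then 1 else Min (y ` A)) (mu A) \<le> t"
    unfolding t_def sugeno_def by (intro Max_ge) auto
  moreover have "t < (if A = {} then 1 else Min (y ` A))"
    using False by (auto simp: t_def A_def)
  ultimately have muA: "mu A \<le> t"
    by linarith
  with top False have "A \<subset> crit n"
    by (auto simp: t_def A_def)
  then obtain B where B: "B \<in> U" "A \<subseteq> B" "mu B \<le> mu A"
    using below by blast
  have "Max (y ` (crit n - B)) \<le> t"
    using U(2)[OF B(1)] B(2) by (subst Max_le_iff) (auto simp: A_def)
  then show ?thesis
    using B muA t_def by auto
qed

lemma sugeno_eq_Min_max: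
  assumes mono: "\<And>X Y. X \<subseteq> Y \<Longrightarrow> Y \<subseteq> crit n \<Longrightarrow> mu X \<le> mu Y"
    and top: "mu (crit n) = 1"
    and y_le_1: "\<And>i. i \<in> crit n \<Longrightarrow> y i \<le> 1"
    and U: "U \<noteq> {}" "\<And>B. B \<in> U \<Longrightarrow> B \<subset> crit n"
    and below: "\<And>A. A \<subset> crit n \<Longrightarrow> \<exists>B\<in>U. A \<subseteq> B \<and> mu B \<le> mu A"
  shows "sugeno n mu y = Min ((\<lambda>B. max (Max (y ` (crit n - B))) (mu B)) ` U)"
proof -
  have le_1: "mu B \<le> 1" if "B \<in> U" for B
    using mono[of B "crit n"] U(2)[OF that] top by auto
  have "\<exists>B\<in>U. max (Max (y ` (crit n - B))) (mu B) \<le> sugeno n mu y"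
    using top y_le_1 U le_1 below by (rule ex_max_le_sugeno)
  then obtain B where B: "B \<in> U" "max (Max (y ` (crit n - B))) (mu B) \<le> sugeno n mu y"
    by blast
  have "finite U"
    using U(2) by (intro finite_subset[of U "Pow (crit n)"]) auto
  moreover have "sugeno n mu y \<le> max (Max (y ` (crit n - B'))) (mu B')" if "B' \<in> U" for B'
    using sugeno_le_max[OF mono U(2)[OF that]] .
  ultimately show ?thesis
    using B by (intro Min_eqI[symmetric]) (force intro: order_trans)+
qed

text \<open>For inputs bounded by 1 this is, by \<open>sugeno_eq_Min_max\<close>, the Sugeno integral of
  every \<open>q\<close>-minitive capacity that agrees with \<open>phi\<close> on \<open>upper_sets n q\<close>.\<close>

definition minmax_sugeno :: "nat \<Rightarrow> nat \<Rightarrow> (nat set \<Rightarrow> real) \<Rightarrow> (nat \<Rightarrow> real) \<Rightarrow> real" where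
  "minmax_sugeno n q phi y = Min ((\<lambda>B. max (Max (y ` (crit n - B))) (phi B)) ` upper_sets n q)"

lemma minmax_sugeno_le:
  "B \<in> upper_sets n q \<Longrightarrow> minmax_sugeno n q phi (x k) \<le> max (gam n x k B) (phi B)"
  unfolding minmax_sugeno_def gam_def using finite_upper_sets by (intro Min_le) auto

lemma minmax_sugeno_attained:
  assumes "q \<in> {1..n}"
  obtains B where "B \<in> upper_sets n q" "minmax_sugeno n q phi (x k) = max (gam n x k B) (phi B)"
proof -
  have "minmax_sugeno n q phi (x k) \<in> (\<lambda>B. max (gam n x k B) (phi B)) ` upper_sets n q"
    unfolding minmax_sugeno_def gam_def using finite_upper_sets upper_sets_nonempty[OF assms]
    by (intro Min_in) auto
  then show thesis
    using that by auto
qed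

lemma sigma_eps_le_iff:
  "0 \<le> E \<Longrightarrow> sigma_eps ai g al \<le> E \<longleftrightarrow> al - ai \<le> 2 * E \<or> al - g \<le> E"
  by (auto simp: sigma_eps_def pos_def min_def max_def)

lemma nabla_iA_le_iff:
  assumes "1 \<le> N" "0 \<le> E"
  shows "nabla_iA n N x alpha i A \<le> E \<longleftrightarrow> gam n x i A - alpha i \<le> E \<and>
           (\<forall>l\<in>{1..N}. alpha l - alpha i \<le> 2 * E \<or> alpha l - gam n x l A \<le> E)"
  using assms by (auto simp: nabla_iA_def pos_def Max_le_iff sigma_eps_le_iff)

lemma nabla_i_le: "A \<in> upper_sets n q \<Longrightarrow> nabla_i n q N x alpha i \<le> nabla_iA n N x alpha i A"
  unfolding nabla_i_def using finite_upper_sets by (intro Min_le) auto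

lemma nabla_i_attained:
  assumes "q \<in> {1..n}"
  obtains A where "A \<in> upper_sets n q" "nabla_i n q N x alpha i = nabla_iA n N x alpha i A"
proof -
  have "nabla_i n q N x alpha i \<in> (\<lambda>A. nabla_iA n N x alpha i A) ` upper_sets n q"
    unfolding nabla_i_def using finite_upper_sets upper_sets_nonempty[OF assms] by (intro Min_in) auto
  then show thesis
    using that by auto
qed

lemma nabla_q_ge: "i \<in> {1..N} \<Longrightarrow> nabla_i n q N x alpha i \<le> nabla_q n q N x alpha"
  unfolding nabla_q_def by (intro Max_ge) auto

lemma nabla_q_attained:
  assumes "1 \<le> N"
  obtains i where "i \<in> {1..N}" "nabla_q n q N x alpha = nabla_i n q N x alpha i"
proof -
  have "nabla_q n q N x alpha \<in> (\<lambda>i. nabla_i n q N x alpha i) ` {1..N}"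
    unfolding nabla_q_def using assms by (intro Max_in) auto
  then show thesis
    using that by auto
qed

lemma nabla_q_nonneg:
  assumes "1 \<le> N" "q \<in> {1..n}"
  shows "0 \<le> nabla_q n q N x alpha"
proof -
  obtain i where "nabla_q n q N x alpha = nabla_i n q N x alpha i"
    using nabla_q_attained[OF assms(1)] .
  moreover obtain A where "nabla_i n q N x alpha i = nabla_iA n N x alpha i A"
    using nabla_i_attained[OF assms(2)] .
  ultimately show ?thesis
    by (simp add: nabla_iA_def pos_def)
qed

lemma nu_q_ge:
  assumes "k \<in> {1..N}" "gam n x k A < max (alpha k - nabla_q n q N x alpha) 0"
  shows "max (alpha k - nabla_q n q N x alpha) 0 \<le> nu_q n q N x alpha A"
proof -
  have "eps_op (gam n x k A) (max (alpha k - nabla_q n q N x alpha) 0) \<le> nu_q n q N x alpha A"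
    unfolding nu_q_def using assms by (intro Max_ge) auto
  then show ?thesis
    using assms by (simp add: eps_op_def)
qed

lemma nu_q_le:
  assumes "1 \<le> N" "0 \<le> c"
    and "\<And>k. k \<in> {1..N} \<Longrightarrow> gam n x k A < max (alpha k - nabla_q n q N x alpha) 0
           \<Longrightarrow> max (alpha k - nabla_q n q N x alpha) 0 \<le> c"
  shows "nu_q n q N x alpha A \<le> c"
proof -
  have "\<forall>k\<in>{1..N}. eps_op (gam n x k A) (max (alpha k - nabla_q n q N x alpha) 0) \<le> c"
    using assms by (auto simp: eps_op_def)
  then show ?thesis
    unfolding nu_q_def using assms(1) by (subst Max_le_iff) auto
qed

lemma nu_q_nonneg:
  assumes "1 \<le> N"
  shows "0 \<le> nu_q n q N x alpha A"
proof -
  have "eps_op (gam n x 1 A) (max (alpha 1 - nabla_q n q N x alpha) 0) \<le> nu_q n q N x alpha A"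
    unfolding nu_q_def using assms by (intro Max_ge) auto
  then show ?thesis
    by (simp add: eps_op_def split: if_splits)
qed

lemma nu_q_le_1:
  assumes "1 \<le> N" "q \<in> {1..n}" "\<And>k. k \<in> {1..N} \<Longrightarrow> alpha k \<le> 1"
  shows "nu_q n q N x alpha A \<le> 1"
  using assms nabla_q_nonneg[OF assms(1,2), of x alpha] by (intro nu_q_le) force+

lemma nu_q_mono:
  assumes "1 \<le> N" "A \<subseteq> B" "B \<subset> crit n"
  shows "nu_q n q N x alpha A \<le> nu_q n q N x alpha B"
proof (rule nu_q_le[OF assms(1) nu_q_nonneg[OF assms(1)]])
  fix k assume "k \<in> {1..N}" "gam n x k A < max (alpha k - nabla_q n q N x alpha) 0"
  moreover have "gam n x k B \<le> gam n x k A"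
    using assms(2,3) by (rule gam_antimono)
  ultimately show "max (alpha k - nabla_q n q N x alpha) 0 \<le> nu_q n q N x alpha B"
    by (intro nu_q_ge) auto
qed

lemma mu_star_upper_sets:
  "B \<in> upper_sets n q \<Longrightarrow> mu_star n q N x alpha B = nu_q n q N x alpha B"
  by (auto simp: mu_star_def upper_sets_iff)

lemma mu_star_below:
  assumes "card X < n - q"
  shows "mu_star n q N x alpha X = Min (nu_q n q N x alpha ` {Y \<in> upper_sets n q. X \<subset> Y})"
proof -
  have "X \<noteq> crit n"
    using assms by auto
  moreover have "{Y. X \<subset> Y \<and> Y \<subseteq> crit n \<and> n - q \<le> card Y \<and> card Y < n} =
      {Y \<in> upper_sets n q. X \<subset> Y}"
    by (auto simp: upper_sets_iff)
  ultimately show ?thesis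
    using assms by (simp add: mu_star_def)
qed

lemma mu_star_below_le:
  assumes "card X < n - q" "Y \<in> upper_sets n q" "X \<subset> Y"
  shows "mu_star n q N x alpha X \<le> nu_q n q N x alpha Y"
  unfolding mu_star_below[OF assms(1)] using assms(2,3) finite_upper_sets by (intro Min_le) auto

lemma subset_crit_cases:
  assumes "X \<subseteq> crit n"
  obtains "X = crit n" | "X \<in> upper_sets n q" | "card X < n - q"
proof -
  have "card X < n" if "X \<noteq> crit n"
    using assms that card_mono[OF finite_crit assms] card_seteq[OF finite_crit assms] by fastforce
  then show thesis
    using that assms by (force simp: upper_sets_iff)
qed

context
  fixes n q N :: nat and x :: "nat \<Rightarrow> nat \<Rightarrow> real" and alpha :: "nat \<Rightarrow> real"
  assumes N: "1 \<le> N" and q: "q \<in> {1..n}" and alpha_le_1: "\<And>k. k \<in> {1..N} \<Longrightarrow> alpha k \<le> 1"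
begin

abbreviation "\<mu> \<equiv> mu_star n q N x alpha"
abbreviation "\<nu> \<equiv> nu_q n q N x alpha"

lemma mu_star_below_attained:
  assumes "X \<subseteq> crit n" "card X < n - q"
  obtains Y where "Y \<in> upper_sets n q" "X \<subset> Y" "\<mu> X = \<nu> Y"
proof -
  from q have "1 \<le> q"
    by simp
  then obtain Y where "Y \<in> upper_sets n q" "X \<subset> Y"
    using assms by (rule upper_sets_above)
  then have "{Y \<in> upper_sets n q. X \<subset> Y} \<noteq> {}"
    by blast
  then have "\<mu> X \<in> \<nu> ` {Y \<in> upper_sets n q. X \<subset> Y}"
    unfolding mu_star_below[OF assms(2)] using finite_upper_sets by (intro Min_in) auto
  then show thesis
    using that by auto
qed

lemma nu_q_range: "0 \<le> \<nu> A \<and> \<nu> A \<le> 1"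
proof
  show "0 \<le> \<nu> A"
    using N by (rule nu_q_nonneg)
  show "\<nu> A \<le> 1"
    by (rule nu_q_le_1[OF N q]) (fact alpha_le_1)
qed

lemma mu_star_range:
  assumes "X \<subseteq> crit n"
  shows "0 \<le> \<mu> X \<and> \<mu> X \<le> 1"
  using assms
proof (cases rule: subset_crit_cases[where q = q])
  case 1
  then show ?thesis
    by (simp add: mu_star_def)
next
  case 2
  then show ?thesis
    using nu_q_range by (simp add: mu_star_upper_sets)
next
  case 3
  then show ?thesis
    using mu_star_below_attained[OF assms] nu_q_range by metis
qed

lemma mu_star_mono:
  assumes "X \<subseteq> Y" "Y \<subseteq> crit n"
  shows "\<mu> X \<le> \<mu> Y"
proof -
  have X: "X \<subseteq> crit n"
    using assms by blast
  have card_le: "card X \<le> card Y"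
    using assms by (intro card_mono) (auto intro: finite_subset)
  show ?thesis
    using assms(2)
  proof (cases rule: subset_crit_cases[where q = q])
    case 1
    then show ?thesis
      using mu_star_range[OF X] by (simp add: mu_star_def)
  next
    case Y: 2
    show ?thesis
      using X
    proof (cases rule: subset_crit_cases[where q = q])
      case 1
      then show ?thesis
        using assms Y by (auto simp: upper_sets_def)
    next
      case 2
      then show ?thesis
        using Y assms nu_q_mono[OF N, of X Y n] by (simp add: mu_star_upper_sets upper_sets_def)
    next
      case 3
      then have "X \<subset> Y"
        using assms(1) Y by (auto simp: upper_sets_iff)
      then show ?thesis
        using mu_star_below_le[OF 3 Y] Y by (simp add: mu_star_upper_sets)
    qed
  next
    case 3
    then obtain Z where Z: "Z \<in> upper_sets n q" "Y \<subset> Z" "\<mu> Y = \<nu> Z"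
      using mu_star_below_attained[OF assms(2)] by blast
    have "\<mu> X \<le> \<nu> Z"
      using 3 card_le Z assms(1) by (intro mu_star_below_le) auto
    then show ?thesis
      using Z by simp
  qed
qed

lemma mu_star_empty:
  assumes "A \<subseteq> crit n" "card A = n - q" "\<nu> A = 0"
  shows "\<mu> {} = 0"
proof -
  have A: "A \<in> upper_sets n q"
    using assms q by (auto simp: upper_sets_iff)
  show ?thesis
  proof (cases "A = {}")
    case True
    then show ?thesis
      using A assms(3) by (simp add: mu_star_upper_sets)
  next
    case False
    then have "card A \<noteq> 0"
      using assms(1) finite_subset by fastforce
    then have "\<mu> {} \<le> \<nu> A"
      using A False assms(2) by (intro mu_star_below_le) auto
    then show ?thesis
      using assms(3) mu_star_range[of "{}"] by simp
  qed
qed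

lemma capacity_mu_star:
  assumes "\<exists>A. A \<subseteq> crit n \<and> card A = n - q \<and> \<nu> A = 0"
  shows "capacity n \<mu>"
proof -
  have "\<mu> {} = 0"
    using assms mu_star_empty by blast
  moreover have "\<mu> (crit n) = 1"
    by (simp add: mu_star_def)
  ultimately show ?thesis
    unfolding capacity_def using mu_star_range mu_star_mono by blast
qed

lemma q_minitive_mu_star: "q_minitive n q \<mu>"
  unfolding q_minitive_def
proof (intro allI impI)
  fix X assume "X \<subseteq> crit n \<and> card X < n - q"
  then obtain Y where Y: "Y \<in> upper_sets n q" "X \<subset> Y" "\<mu> X = \<nu> Y"
    using mu_star_below_attained by blast
  let ?S = "{Y. X \<subset> Y \<and> Y \<subseteq> crit n \<and> n - q \<le> card Y}"
  have "finite ?S"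
    by (rule finite_subset[of _ "Pow (crit n)"]) auto
  moreover have "\<mu> X \<le> \<mu> Z" if "Z \<in> ?S" for Z
    using that by (intro mu_star_mono) auto
  moreover have "\<mu> X \<in> \<mu> ` ?S"
  proof
    show "\<mu> X = \<mu> Y"
      using Y by (simp add: mu_star_upper_sets)
    show "Y \<in> ?S"
      using Y by (auto simp: upper_sets_iff)
  qed
  ultimately show "\<mu> X = Min (\<mu> ` ?S)"
    by (intro Min_eqI[symmetric]) auto
qed

lemma sugeno_mu_star:
  assumes "\<And>i. i \<in> crit n \<Longrightarrow> y i \<le> 1"
  shows "sugeno n \<mu> y = minmax_sugeno n q \<nu> y"
proof -
  have "sugeno n \<mu> y = Min ((\<lambda>B. max (Max (y ` (crit n - B))) (\<mu> B)) ` upper_sets n q)"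
  proof (rule sugeno_eq_Min_max[OF mu_star_mono _ assms upper_sets_nonempty[OF q]])
    show "\<mu> (crit n) = 1"
      by (simp add: mu_star_def)
    show "B \<subset> crit n" if "B \<in> upper_sets n q" for B
      using that by (simp add: upper_sets_def)
    show "\<exists>B\<in>upper_sets n q. A \<subseteq> B \<and> \<mu> B \<le> \<mu> A" if A: "A \<subset> crit n" for A
    proof -
      from A have "A \<subseteq> crit n"
        by blast
      then show ?thesis
      proof (cases rule: subset_crit_cases[where q = q])
        case 1
        with A show ?thesis
          by blast
      next
        case 2
        then show ?thesis
          by blast
      next
        case 3
        then obtain Y where "Y \<in> upper_sets n q" "A \<subset> Y" "\<mu> A = \<nu> Y"
          using mu_star_below_attained[OF \<open>A \<subseteq> crit n\<close>] by blast
        then show ?thesis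
          by (intro bexI[of _ Y]) (auto simp: mu_star_upper_sets)
      qed
    qed
  qed
  also have "\<dots> = minmax_sugeno n q \<nu> y"
    unfolding minmax_sugeno_def
    by (intro arg_cong[where f = Min] image_cong) (simp_all add: mu_star_upper_sets)
  finally show ?thesis .
qed

end

lemma minmax_sugeno_nu_q_ge:
  assumes "q \<in> {1..n}" "k \<in> {1..N}"
  shows "alpha k - nabla_q n q N x alpha \<le> minmax_sugeno n q (nu_q n q N x alpha) (x k)"
proof -
  let ?t = "max (alpha k - nabla_q n q N x alpha) 0"
  obtain B where B: "B \<in> upper_sets n q"
    "minmax_sugeno n q (nu_q n q N x alpha) (x k) = max (gam n x k B) (nu_q n q N x alpha B)"
    using minmax_sugeno_attained[OF assms(1)] .
  have "alpha k - nabla_q n q N x alpha \<le> max (gam n x k B) (nu_q n q N x alpha B)"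
  proof (cases "gam n x k B < ?t")
    case True
    then have "?t \<le> nu_q n q N x alpha B"
      by (rule nu_q_ge[OF assms(2)])
    then show ?thesis
      by (simp add: le_max_iff_disj)
  next
    case False
    then show ?thesis
      by (simp add: not_less le_max_iff_disj)
  qed
  then show ?thesis
    using B(2) by simp
qed

lemma minmax_sugeno_nu_q_le:
  assumes "1 \<le> N" "q \<in> {1..n}" "k \<in> {1..N}" "0 \<le> alpha k"
  shows "minmax_sugeno n q (nu_q n q N x alpha) (x k) \<le> alpha k + nabla_q n q N x alpha"
proof -
  let ?D = "nabla_q n q N x alpha"
  have D: "0 \<le> ?D"
    using assms(1,2) by (rule nabla_q_nonneg)
  obtain A where A: "A \<in> upper_sets n q" "nabla_i n q N x alpha k = nabla_iA n N x alpha k A"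
    using nabla_i_attained[OF assms(2)] .
  have "nabla_iA n N x alpha k A \<le> ?D"
    using A(2) nabla_q_ge[OF assms(3), of n q x alpha] by simp
  then have gam: "gam n x k A - alpha k \<le> ?D"
    and sep: "\<forall>l\<in>{1..N}. alpha l - alpha k \<le> 2 * ?D \<or> alpha l - gam n x l A \<le> ?D"
    unfolding nabla_iA_le_iff[OF assms(1) D] by blast+
  have "nu_q n q N x alpha A \<le> alpha k + ?D"
  proof (rule nu_q_le[OF assms(1)])
    show "0 \<le> alpha k + ?D"
      using assms(4) D by simp
    fix l assume "l \<in> {1..N}" "gam n x l A < max (alpha l - ?D) 0"
    then show "max (alpha l - ?D) 0 \<le> alpha k + ?D"
      using sep assms(4) D by fastforce
  qed
  then show ?thesis
    using minmax_sugeno_le[OF A(1), of "nu_q n q N x alpha" x k] gam by linarith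
qed

lemma nabla_q_le_minmax_sugeno_error:
  assumes "1 \<le> N" "q \<in> {1..n}"
    and err: "\<And>k. k \<in> {1..N} \<Longrightarrow> \<bar>minmax_sugeno n q phi (x k) - alpha k\<bar> \<le> E"
  shows "nabla_q n q N x alpha \<le> E"
proof -
  obtain i where i: "i \<in> {1..N}" "nabla_q n q N x alpha = nabla_i n q N x alpha i"
    using nabla_q_attained[OF assms(1)] .
  obtain B where B: "B \<in> upper_sets n q" "minmax_sugeno n q phi (x i) = max (gam n x i B) (phi B)"
    using minmax_sugeno_attained[OF assms(2)] .
  have err_i: "max (gam n x i B) (phi B) \<le> alpha i + E"
    using err[OF i(1)] unfolding B(2) abs_le_iff by linarith
  have E: "0 \<le> E"
    using err[OF i(1)] by linarith
  have "alpha l - alpha i \<le> 2 * E \<or> alpha l - gam n x l B \<le> E" if l: "l \<in> {1..N}" for l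
  proof -
    have "alpha l - E \<le> max (gam n x l B) (phi B)"
      using err[OF l] minmax_sugeno_le[OF B(1), of phi x l] unfolding abs_le_iff by linarith
    then show ?thesis
      using err_i by (auto simp: le_max_iff_disj)
  qed
  then have "nabla_iA n N x alpha i B \<le> E"
    unfolding nabla_iA_le_iff[OF assms(1) E] using err_i by simp
  then show ?thesis
    using i(2) nabla_i_le[OF B(1), of N x alpha i] by linarith
qed

lemma Max_minmax_sugeno_nu_q_error:
  assumes "1 \<le> N" "q \<in> {1..n}" "\<And>k. k \<in> {1..N} \<Longrightarrow> 0 \<le> alpha k"
  shows "Max ((\<lambda>k. \<bar>minmax_sugeno n q (nu_q n q N x alpha) (x k) - alpha k\<bar>) ` {1..N}) =
    nabla_q n q N x alpha"
    (is "Max (?err ` _) = _")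
proof (rule antisym)
  have "?err k \<le> nabla_q n q N x alpha" if k: "k \<in> {1..N}" for k
    using minmax_sugeno_nu_q_ge[where x = x and alpha = alpha, OF assms(2) k]
      minmax_sugeno_nu_q_le[where x = x and alpha = alpha, OF assms(1,2) k assms(3)[OF k]]
    by (simp add: abs_le_iff)
  then show "Max (?err ` {1..N}) \<le> nabla_q n q N x alpha"
    using assms(1) by (subst Max_le_iff) auto
  show "nabla_q n q N x alpha \<le> Max (?err ` {1..N})"
    by (rule nabla_q_le_minmax_sugeno_error[OF assms(1,2)]) (rule Max_ge; auto)
qed

theorem proposition4:
  fixes n q N :: nat and x :: "nat \<Rightarrow> nat \<Rightarrow> real" and alpha :: "nat \<Rightarrow> real"
  assumes "1 \<le> N"
    and "\<And>k i. k \<in> {1..N} \<Longrightarrow> i \<in> crit n \<Longrightarrow> 0 \<le> x k i \<and> x k i \<le> 1"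
    and "\<And>k. k \<in> {1..N} \<Longrightarrow> 0 \<le> alpha k \<and> alpha k \<le> 1"
    and "q \<in> {1..n}"
    and "\<exists>A. A \<subseteq> crit n \<and> card A = n - q \<and> nu_q n q N x alpha A = 0"
  shows "capacity n (mu_star n q N x alpha) \<and> q_minitive n q (mu_star n q N x alpha) \<and>
         Max ((\<lambda>k. \<bar>sugeno n (mu_star n q N x alpha) (x k) - alpha k\<bar>) ` {1..N})
           = nabla_q n q N x alpha"
proof -
  let ?\<mu> = "mu_star n q N x alpha" and ?\<nu> = "nu_q n q N x alpha"
  have capacity: "capacity n ?\<mu>"
    by (rule capacity_mu_star[OF assms(1,4)]) (simp_all add: assms(3,5))
  have q_minitive: "q_minitive n q ?\<mu>"
    by (rule q_minitive_mu_star[OF assms(1,4)]) (simp add: assms(3))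
  have "sugeno n ?\<mu> (x k) = minmax_sugeno n q ?\<nu> (x k)" if "k \<in> {1..N}" for k
    by (rule sugeno_mu_star[OF assms(1,4)]) (simp_all add: assms(2)[OF that] assms(3))
  then have "Max ((\<lambda>k. \<bar>sugeno n ?\<mu> (x k) - alpha k\<bar>) ` {1..N}) =
      Max ((\<lambda>k. \<bar>minmax_sugeno n q ?\<nu> (x k) - alpha k\<bar>) ` {1..N})"
    by simp
  also have "\<dots> = nabla_q n q N x alpha"
    using assms(1,3,4) by (intro Max_minmax_sugeno_nu_q_error) auto
  finally show ?thesis
    using capacity q_minitive by blast
qed

end
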